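(* Let ${\rm H}>0$, ${\rm K}>0$ and set \[ R^{({\rm H},{\rm K})}(s,t)=2^{-{\rm K}}\Bigl(\bigl(|s|^{2{\rm H}}+|t|^{2{\rm H}}\bigr)^{{\rm K}}-|t-s|^{2{\rm H}{\rm K}}\Bigr). \] (a) If there exists a centered Gaussian process $(B(t))_{t\in\mathbb{R}}$ with covariance $R^{({\rm H},{\rm K})}(s,t)$, $s,t\in\mathbb{R}$, then $(2{\rm H}-1){\rm K}\le 1$, i.e. ${\rm K}\le \frac{1}{2{\rm H}-1}$ whenever ${\rm H}>\tfrac12$. (b) If there exists a centered Gaussian process $(B(t))_{t\ge 0}$ with covariance $R^{({\rm H},{\rm K})}(s,t)$, $s,t\ge 0$, then ${\rm K}\le \widehat{{\rm K}}({\rm H})$, where \[ \widehat{{\rm K}}({\rm H}):=\sup\Bigl\{{\rm K}'>0:\ \sup_{\tau>0}\Bigl(\bigl(\cosh({\rm H}\tau)\bigr)^{{\rm K}'}-2^{(2{\rm H}-1){\rm K}'}\bigl|\sinh(\tau/2)\bigr|^{2{\rm H}{\rm K}'}\Bigr)\le 1\Bigr\}. \] Moreover, $\widehat{{\rm K}}({\rm H})<{\rm H}^{-1}$ for every ${\rm H}>1$. *)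

theory Defs
  imports "HOL-Probability.Probability"
begin

definition bifrac_cov :: "real \<Rightarrow> real \<Rightarrow> real \<Rightarrow> real \<Rightarrow> real" where
  "bifrac_cov H K s t =
     2 powr (- K) * ((\<bar>s\<bar> powr (2 * H) + \<bar>t\<bar> powr (2 * H)) powr K - \<bar>t - s\<bar> powr (2 * H * K))"

definition centered_gaussian_rv :: "'a measure \<Rightarrow> ('a \<Rightarrow> real) \<Rightarrow> real \<Rightarrow> bool" where
  "centered_gaussian_rv M Y v \<longleftrightarrow>
     Y \<in> borel_measurable M \<and>
     ((v = 0 \<and> (AE \<omega> in M. Y \<omega> = 0)) \<or>
      (v > 0 \<and> distributed M lborel Y (normal_density 0 (sqrt v))))"

definition centered_gaussian_process ::
    "'a measure \<Rightarrow> real set \<Rightarrow> (real \<Rightarrow> 'a \<Rightarrow> real) \<Rightarrow> (real \<Rightarrow> real \<Rightarrow> real) \<Rightarrow> bool" where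
  "centered_gaussian_process M T X R \<longleftrightarrow>
     prob_space M \<and>
     (\<forall>t\<in>T. X t \<in> borel_measurable M) \<and>
     (\<forall>S c. finite S \<and> S \<subseteq> T \<longrightarrow>
        centered_gaussian_rv M (\<lambda>\<omega>. \<Sum>t\<in>S. c t * X t \<omega>)
          (\<Sum>s\<in>S. \<Sum>t\<in>S. c s * c t * R s t))"

text \<open>\<open>\<widehat>K(H)\<close>, valued in the extended reals (it may a priori be +\<infinity>).\<close>
definition K_hat :: "real \<Rightarrow> ereal" where
  "K_hat H = Sup (ereal ` {K'. K' > 0 \<and>
      (SUP \<tau>\<in>{0<..}. ereal (cosh (H * \<tau>) powr K'
                         - 2 powr ((2 * H - 1) * K') * \<bar>sinh (\<tau> / 2)\<bar> powr (2 * H * K'))) \<le> 1})"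

end

theory Submission
  imports Defs
begin

text \<open>Everything follows from the nonnegativity of the variance of a combination a B(s) + b B(t).
  On the whole line, s = -1, t = 1 and a = b = 1 give 2^((2H-1)K) \<le> 2. On the half line, the
  points s = e^(-\<tau>/2), t = e^(\<tau>/2) have variances e^(-HK\<tau>) and e^(HK\<tau>), so Cauchy-Schwarz gives
  R(s,t) \<le> 1, and R(s,t) is exactly the function of \<tau> occurring in the definition of K_hat.
  For K_hat H < 1/H, the bounds cosh x \<ge> e^x/2 and (1 - y)^p \<le> 1/(1 + py) give an explicit
  minorant of that function which at K = 1/H tends to 2^(1 - 1/H) > 1 as \<tau> \<rightarrow> \<infinity>. Fixing one
  such \<tau>, the minorant is continuous and (as soon as H\<tau> \<ge> ln 2) increasing in K, so it exceeds 1
  for every K \<ge> K0 with some K0 < 1/H.\<close>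

lemma centered_gaussian_process_two_point:
  assumes "centered_gaussian_process M T X R" "s \<in> T" "t \<in> T" "s \<noteq> t" "R t s = R s t"
  shows "0 \<le> a\<^sup>2 * R s s + 2 * a * b * R s t + b\<^sup>2 * R t t"
proof -
  define c where "c = (\<lambda>x. if x = s then a else b)"
  have gaussian: "\<forall>S c. finite S \<and> S \<subseteq> T \<longrightarrow>
      centered_gaussian_rv M (\<lambda>\<omega>. \<Sum>t\<in>S. c t * X t \<omega>) (\<Sum>s\<in>S. \<Sum>t\<in>S. c s * c t * R s t)"
    using assms(1) by (simp add: centered_gaussian_process_def)
  have "centered_gaussian_rv M (\<lambda>\<omega>. \<Sum>x\<in>{s, t}. c x * X x \<omega>)
          (\<Sum>x\<in>{s, t}. \<Sum>y\<in>{s, t}. c x * c y * R x y)"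
    using assms(2,3) by (intro gaussian[rule_format]) simp
  then have "0 \<le> (\<Sum>x\<in>{s, t}. \<Sum>y\<in>{s, t}. c x * c y * R x y)"
    unfolding centered_gaussian_rv_def by auto
  also have "\<dots> = a * a * R s s + a * b * R s t + (b * a * R t s + b * b * R t t)"
    using assms(4) by (simp add: c_def)
  also have "\<dots> = a\<^sup>2 * R s s + 2 * a * b * R s t + b\<^sup>2 * R t t"
    using assms(5) by (simp add: power2_eq_square)
  finally show ?thesis .
qed

lemma one_minus_powr_le:
  fixes y p :: real
  assumes "0 \<le> y" "y < 1" "0 \<le> p"
  shows "(1 - y) powr p \<le> 1 / (1 + p * y)"
proof -
  have "(1 - y) powr p = exp (p * ln (1 - y))"
    using assms by (simp add: powr_def)
  also have "\<dots> \<le> exp (- (p * y))"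
  proof -
    have "p * ln (1 - y) \<le> p * (- y)"
      using ln_le_minus_one[of "1 - y"] assms by (intro mult_left_mono) auto
    then show ?thesis
      by simp
  qed
  also have "\<dots> = 1 / exp (p * y)"
    by (simp add: exp_minus inverse_eq_divide)
  also have "\<dots> \<le> 1 / (1 + p * y)"
    using assms exp_ge_add_one_self[of "p * y"]
    by (intro divide_left_mono) (auto intro!: mult_pos_pos add_pos_nonneg)
  finally show ?thesis .
qed

lemma bifrac_cov_commute: "bifrac_cov H K t s = bifrac_cov H K s t"
  unfolding bifrac_cov_def by (simp add: abs_minus_commute add.commute)

lemma bifrac_cov_diag: "bifrac_cov H K t t = \<bar>t\<bar> powr (2 * H * K)"
proof -
  have "(\<bar>t\<bar> powr (2 * H) + \<bar>t\<bar> powr (2 * H)) powr K = 2 powr K * \<bar>t\<bar> powr (2 * H * K)"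
    by (simp add: powr_mult powr_powr)
  then show ?thesis
    unfolding bifrac_cov_def by (simp add: powr_minus field_simps)
qed

definition bifrac_profile :: "real \<Rightarrow> real \<Rightarrow> real \<Rightarrow> real" where
  "bifrac_profile H K \<tau> =
     cosh (H * \<tau>) powr K - 2 powr ((2 * H - 1) * K) * \<bar>sinh (\<tau> / 2)\<bar> powr (2 * H * K)"

lemma bifrac_cov_exp_pair:
  "bifrac_cov H K (exp (- (\<tau> / 2))) (exp (\<tau> / 2)) = bifrac_profile H K \<tau>"
proof -
  have cosh: "\<bar>exp (- (\<tau> / 2))\<bar> powr (2 * H) + \<bar>exp (\<tau> / 2)\<bar> powr (2 * H) = 2 * cosh (H * \<tau>)"
    by (simp add: powr_def cosh_def algebra_simps)
  have sinh: "\<bar>exp (\<tau> / 2) - exp (- (\<tau> / 2))\<bar> = 2 * \<bar>sinh (\<tau> / 2)\<bar>"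
    by (simp add: sinh_def)
  have two: "(2::real) powr (- K) * 2 powr (2 * H * K) = 2 powr ((2 * H - 1) * K)"
    by (simp add: powr_add[symmetric] algebra_simps)
  show ?thesis
    unfolding bifrac_cov_def bifrac_profile_def cosh sinh
    by (simp add: powr_mult right_diff_distrib powr_minus two[symmetric] mult.assoc)
qed

lemma K_hat_eq:
  "K_hat H = Sup (ereal ` {K. K > 0 \<and> (\<forall>\<tau>>0. bifrac_profile H K \<tau> \<le> 1)})"
proof -
  have "(SUP \<tau>\<in>{0<..}. ereal (bifrac_profile H K \<tau>)) \<le> 1 \<longleftrightarrow> (\<forall>\<tau>>0. bifrac_profile H K \<tau> \<le> 1)"
    for K
    unfolding SUP_le_iff by auto
  then show ?thesis
    unfolding K_hat_def bifrac_profile_def[symmetric] by presburger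
qed

lemma bifrac_gaussian_process_on_reals:
  assumes "centered_gaussian_process M UNIV X (bifrac_cov H K)"
  shows "(2 * H - 1) * K \<le> 1"
proof -
  have "0 \<le> bifrac_cov H K (- 1) (- 1) + 2 * bifrac_cov H K (- 1) 1 + bifrac_cov H K 1 1"
    using centered_gaussian_process_two_point[OF assms, of "- 1" 1 1 1] bifrac_cov_commute by simp
  moreover have "bifrac_cov H K (- 1) 1 = 1 - 2 powr ((2 * H - 1) * K)"
    unfolding bifrac_cov_def by (simp add: right_diff_distrib algebra_simps flip: powr_add)
  ultimately have "2 powr ((2 * H - 1) * K) \<le> 2 powr 1"
    by (simp add: bifrac_cov_diag)
  then show ?thesis
    by (subst (asm) powr_le_cancel_iff) auto
qed

lemma bifrac_gaussian_process_on_half_line: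
  assumes "centered_gaussian_process M {0..} X (bifrac_cov H K)" "\<tau> > 0"
  shows "bifrac_profile H K \<tau> \<le> 1"
proof -
  define s t where "s = exp (- (\<tau> / 2))" and "t = exp (\<tau> / 2)"
  define a where "a = exp (H * K * \<tau> / 2)"
  have "s \<noteq> t" "s \<in> {0..}" "t \<in> {0..}"
    using assms(2) by (simp_all add: s_def t_def)
  then have "0 \<le> a\<^sup>2 * bifrac_cov H K s s + 2 * a * (- inverse a) * bifrac_cov H K s t
                 + (- inverse a)\<^sup>2 * bifrac_cov H K t t"
    by (intro centered_gaussian_process_two_point[OF assms(1)] bifrac_cov_commute)
  moreover have "a\<^sup>2 * bifrac_cov H K s s = 1"
    unfolding a_def s_def bifrac_cov_diag
    by (simp add: powr_def power2_eq_square flip: exp_add)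
  moreover have "(- inverse a)\<^sup>2 * bifrac_cov H K t t = 1"
    unfolding a_def t_def bifrac_cov_diag
    by (simp add: powr_def power2_eq_square flip: exp_add exp_minus)
  ultimately have "0 \<le> 1 + 2 * a * (- inverse a) * bifrac_cov H K s t + 1"
    by linarith
  then have "bifrac_cov H K s t \<le> 1"
    by (simp add: a_def field_simps)
  then show ?thesis
    by (simp add: s_def t_def bifrac_cov_exp_pair)
qed

definition bifrac_minorant :: "real \<Rightarrow> real \<Rightarrow> real \<Rightarrow> real" where
  "bifrac_minorant H K \<tau> =
     2 powr (- K) * exp ((H * K - 1) * \<tau>) * (2 * H * K / (1 + 2 * H * K * exp (- \<tau>)))"

lemma bifrac_minorant_le_profile:
  assumes "H > 0" "K > 0" "\<tau> > 0"
  shows "bifrac_minorant H K \<tau> \<le> bifrac_profile H K \<tau>"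
proof -
  define p y where "p = 2 * H * K" and "y = exp (- \<tau>)"
  define E where "E = 2 powr (- K) * exp (H * K * \<tau>)"
  have p: "p > 0" and y: "0 < y" "y < 1"
    using assms by (simp_all add: p_def y_def)
  have "(exp (H * \<tau>) / 2) powr K \<le> cosh (H * \<tau>) powr K"
    using assms by (intro powr_mono2) (auto simp: cosh_def)
  moreover have "(exp (H * \<tau>) / 2) powr K = exp (H * \<tau> * K) / 2 powr K"
    by (simp add: powr_divide exp_powr_real)
  moreover have "\<dots> = E"
    by (simp add: E_def powr_minus divide_inverse mult_ac)
  ultimately have cosh: "E \<le> cosh (H * \<tau>) powr K"
    by simp
  have abs_sinh: "\<bar>sinh (\<tau> / 2)\<bar> = exp (\<tau> / 2) * (1 - y) / 2"
  proof -
    have "exp (\<tau> / 2) * y = exp (- (\<tau> / 2))"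
      by (simp add: y_def flip: exp_add)
    then have sinh_eq: "sinh (\<tau> / 2) = exp (\<tau> / 2) * (1 - y) / 2"
      by (simp add: sinh_def right_diff_distrib)
    show ?thesis
      unfolding sinh_eq using y by simp
  qed
  have "exp (\<tau> / 2) powr p = exp (H * K * \<tau>)"
    unfolding exp_powr_real p_def by (rule arg_cong[where f = exp]) (simp add: field_simps)
  then have sinh_powr: "\<bar>sinh (\<tau> / 2)\<bar> powr p = exp (H * K * \<tau>) * (1 - y) powr p / 2 powr p"
    unfolding abs_sinh using y by (simp add: powr_divide powr_mult)
  have two: "2 powr ((2 * H - 1) * K) / 2 powr p = (2::real) powr (- K)"
    by (simp add: p_def algebra_simps flip: powr_diff)
  have "2 powr ((2 * H - 1) * K) * \<bar>sinh (\<tau> / 2)\<bar> powr p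
      = 2 powr ((2 * H - 1) * K) / 2 powr p * (exp (H * K * \<tau>) * (1 - y) powr p)"
    unfolding sinh_powr by simp
  also have "\<dots> = E * (1 - y) powr p"
    unfolding two E_def by (simp add: mult.assoc)
  finally have sinh: "2 powr ((2 * H - 1) * K) * \<bar>sinh (\<tau> / 2)\<bar> powr p = E * (1 - y) powr p" .
  have "1 + p * y > 0"
    using p y by (metis add_pos_pos mult_pos_pos zero_less_one)
  then have "1 - 1 / (1 + p * y) = p * y / (1 + p * y)"
    by (simp add: field_simps)
  moreover have "exp ((H * K - 1) * \<tau>) = exp (H * K * \<tau>) * y"
    by (simp add: y_def left_diff_distrib flip: exp_add)
  ultimately have "bifrac_minorant H K \<tau> = E * (1 - 1 / (1 + p * y))"
    unfolding bifrac_minorant_def E_def p_def[symmetric] y_def[symmetric] by simp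
  also have "\<dots> \<le> E * (1 - (1 - y) powr p)"
    using one_minus_powr_le[of y p] y p by (intro mult_left_mono) (auto simp: E_def)
  also have "\<dots> \<le> bifrac_profile H K \<tau>"
    using cosh sinh unfolding bifrac_profile_def p_def by (simp add: right_diff_distrib)
  finally show ?thesis .
qed

lemma bifrac_minorant_mono:
  assumes "H > 0" "0 < K" "K \<le> K'" "ln 2 \<le> H * \<tau>"
  shows "bifrac_minorant H K \<tau> \<le> bifrac_minorant H K' \<tau>"
proof -
  have growth: "2 powr (- k) * exp ((H * k - 1) * \<tau>) = exp (k * (H * \<tau> - ln 2) - \<tau>)" for k
    by (simp add: powr_def algebra_simps flip: exp_add)
  have "exp (K * (H * \<tau> - ln 2) - \<tau>) \<le> exp (K' * (H * \<tau> - ln 2) - \<tau>)"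
    using assms by (simp add: mult_right_mono)
  moreover have "2 * H * K / (1 + 2 * H * K * exp (- \<tau>)) \<le> 2 * H * K' / (1 + 2 * H * K' * exp (- \<tau>))"
    using assms by (simp add: frac_le_eq add_pos_nonneg field_simps mult_right_mono)
  ultimately show ?thesis
    unfolding bifrac_minorant_def growth using assms
    by (intro mult_mono) (auto intro!: divide_nonneg_pos add_pos_nonneg)
qed

lemma bifrac_minorant_tendsto:
  assumes "H > 0"
  shows "((\<lambda>\<tau>. bifrac_minorant H (1 / H) \<tau>) \<longlongrightarrow> 2 powr (1 - 1 / H)) at_top"
proof -
  have "((\<lambda>\<tau>::real. exp (- \<tau>)) \<longlongrightarrow> 0) at_top"
    by (rule filterlim_compose[OF exp_at_bot filterlim_uminus_at_bot_at_top])
  then have "((\<lambda>\<tau>. 2 powr (- (1 / H)) * (2 / (1 + 2 * exp (- \<tau>))))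
      \<longlongrightarrow> 2 powr (- (1 / H)) * (2 / (1 + 2 * 0))) at_top"
    by (intro tendsto_intros) auto
  moreover have "2 powr (- (1 / H)) * (2 / (1 + 2 * 0)) = (2::real) powr (1 - 1 / H)"
    by (simp add: powr_diff powr_minus divide_inverse)
  moreover have "bifrac_minorant H (1 / H) \<tau> = 2 powr (- (1 / H)) * (2 / (1 + 2 * exp (- \<tau>)))"
    for \<tau>
    using assms by (simp add: bifrac_minorant_def)
  ultimately show ?thesis
    by simp
qed

lemma K_hat_less_inverse:
  assumes "H > 1"
  shows "K_hat H < ereal (1 / H)"
proof -
  have H: "H > 0"
    using assms by simp
  have "\<forall>\<^sub>F \<tau> in at_top. 1 < bifrac_minorant H (1 / H) \<tau>"
    using assms by (intro order_tendstoD(1)[OF bifrac_minorant_tendsto[OF H]]) simp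
  moreover have "\<forall>\<^sub>F \<tau> in at_top. ln 2 / H \<le> \<tau> \<and> 0 < \<tau>"
    by (intro eventually_conj eventually_ge_at_top eventually_gt_at_top)
  ultimately have "\<forall>\<^sub>F \<tau> in at_top. 1 < bifrac_minorant H (1 / H) \<tau> \<and> ln 2 / H \<le> \<tau> \<and> 0 < \<tau>"
    by (rule eventually_conj)
  then obtain \<tau> where \<tau>: "1 < bifrac_minorant H (1 / H) \<tau>" "ln 2 \<le> H * \<tau>" "0 < \<tau>"
    using H by (auto simp: eventually_at_top_linorder field_simps)
  have "0 < 1 + 2 * H * (1 / H) * exp (- \<tau>)"
    using H by (intro add_pos_pos) auto
  then have "isCont (\<lambda>K. bifrac_minorant H K \<tau>) (1 / H)"
    unfolding bifrac_minorant_def by (intro continuous_intros) auto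
  then have "((\<lambda>K. bifrac_minorant H K \<tau>) \<longlongrightarrow> bifrac_minorant H (1 / H) \<tau>) (at_left (1 / H))"
    by (simp add: isCont_def filterlim_at_split)
  then have "\<forall>\<^sub>F K in at_left (1 / H). 1 < bifrac_minorant H K \<tau> \<and> K \<in> {0<..<1 / H}"
    using \<tau>(1) H by (intro eventually_conj order_tendstoD(1) eventually_at_left_real) auto
  then obtain K0 where K0: "1 < bifrac_minorant H K0 \<tau>" "0 < K0" "K0 < 1 / H"
    using eventually_happens'[OF trivial_limit_at_left_real] by auto
  have "K < K0" if "K > 0" "\<forall>\<tau>>0. bifrac_profile H K \<tau> \<le> 1" for K
  proof (rule ccontr)
    assume "\<not> K < K0"
    then have "bifrac_minorant H K0 \<tau> \<le> bifrac_minorant H K \<tau>"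
      using bifrac_minorant_mono[OF H K0(2) _ \<tau>(2)] by simp
    also have "\<dots> \<le> bifrac_profile H K \<tau>"
      using bifrac_minorant_le_profile[OF H that(1) \<tau>(3)] .
    also have "\<dots> \<le> 1"
      using that(2) \<tau>(3) by blast
    finally show False
      using K0(1) by simp
  qed
  then have "K_hat H \<le> ereal K0"
    unfolding K_hat_eq by (intro Sup_least) force
  also have "\<dots> < ereal (1 / H)"
    using K0(3) by simp
  finally show ?thesis .
qed

theorem proposition3p2:
  fixes H K :: real
  assumes "H > 0" and "K > 0"
  shows "((\<exists>(M :: 'a measure) X. centered_gaussian_process M UNIV X (bifrac_cov H K))
           \<longrightarrow> (2 * H - 1) * K \<le> 1)
         \<and> ((\<exists>(M :: 'b measure) X. centered_gaussian_process M {0..} X (bifrac_cov H K))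
           \<longrightarrow> ereal K \<le> K_hat H)
         \<and> (\<forall>H'. H' > 1 \<longrightarrow> K_hat H' < ereal (1 / H'))"
proof (intro conjI impI allI)
  assume "\<exists>(M :: 'a measure) X. centered_gaussian_process M UNIV X (bifrac_cov H K)"
  then show "(2 * H - 1) * K \<le> 1"
    using bifrac_gaussian_process_on_reals by blast
next
  assume "\<exists>(M :: 'b measure) X. centered_gaussian_process M {0..} X (bifrac_cov H K)"
  then have "K \<in> {K. K > 0 \<and> (\<forall>\<tau>>0. bifrac_profile H K \<tau> \<le> 1)}"
    using assms(2) bifrac_gaussian_process_on_half_line by blast
  then show "ereal K \<le> K_hat H"
    unfolding K_hat_eq by (rule Sup_upper[OF imageI])
next
  fix H' :: real
  assume "H' > 1"
  then show "K_hat H' < ereal (1 / H')"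
    by (rule K_hat_less_inverse)
qed

end
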